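(* For every tree $T\subseteq\mathbb{N}^{<\mathbb{N}}$, $[\mathcal{JT}(T)]=\{\mathcal{J}(Z):Z\in[T]\}$.
   Context: A tree is a subset of $\mathbb{N}^{<\mathbb{N}}$ closed under initial segments; $[T]$ is the set of infinite paths through $T$. Strings are coded by natural numbers via a fixed computable coding with $\sigma\subsetneq\tau$ implying code$(\sigma)<$ code$(\tau)$. For $\sigma$ finite or infinite, $\{e\}^\sigma_t(n)\downarrow$ means the $e$-th machine on input $n$ with oracle $\sigma$ halts in fewer than $\min(|\sigma|,t)$ steps. For $Z\in\mathbb{N}^\mathbb{N}$: $t_{-1}=1$, $t_n=\max\{t_{n-1}+1,\mu t(\{n\}^Z_t(n)\downarrow)\}$ ($t_n=t_{n-1}+1$ if no such $t$), and $\mathcal{J}(Z)(n)=Z\restriction t_n$. For finite $\sigma$: $t_{-1}=1$, $t_n=\max\{t_{n-1}+1,\mu t(\{n\}^{\sigma\restriction t}(n)\downarrow)\}$ (halting within $|\sigma\restriction t|$ steps; $t_n=t_{n-1}+1$ if no such $t$), and $J(\sigma)=\langle\sigma\restriction t_0,\dots,\sigma\restriction t_{k-1}\rangle$ with $k$ least such that $t_k>|\sigma|$. $\mathcal{JT}(T)=\{J(\sigma):\sigma\in T\}$. *)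

theory Defs
  imports Main "HOL-Library.Nat_Bijection"
begin

definition restr :: "(nat \<Rightarrow> nat) \<Rightarrow> nat \<Rightarrow> nat list" where
  "restr Z n = map Z [0..<n]"

definition is_tree :: "nat list set \<Rightarrow> bool" where
  "is_tree T \<longleftrightarrow> (\<forall>\<sigma>\<in>T. \<forall>n. take n \<sigma> \<in> T)"

definition paths :: "nat list set \<Rightarrow> (nat \<Rightarrow> nat) set" where
  "paths T = {Z. \<forall>n. restr Z n \<in> T}"

(* fixed computable coding of strings by numbers; list_encode satisfies
   sigma proper prefix of tau ==> code sigma < code tau *)
definition code :: "nat list \<Rightarrow> nat" where
  "code = list_encode"

(* Abstract machine model: Phi e X n s  means: the e-th oracle machine on input n
   with oracle X halts in fewer than s steps. *)

(* a finite oracle viewed as an element of N^N (padding irrelevant by the use principle) *)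
definition ext :: "nat list \<Rightarrow> nat \<Rightarrow> nat" where
  "ext \<sigma> i = (if i < length \<sigma> then \<sigma> ! i else 0)"

(* {e}^Z_t(n) halts, Z infinite: fewer than min(infinity,t) = t steps *)
definition halts_inf :: "(nat \<Rightarrow> (nat \<Rightarrow> nat) \<Rightarrow> nat \<Rightarrow> nat \<Rightarrow> bool)
    \<Rightarrow> nat \<Rightarrow> (nat \<Rightarrow> nat) \<Rightarrow> nat \<Rightarrow> nat \<Rightarrow> bool" where
  "halts_inf \<Phi> e Z t n = \<Phi> e Z n t"

definition halts_fin :: "(nat \<Rightarrow> (nat \<Rightarrow> nat) \<Rightarrow> nat \<Rightarrow> nat \<Rightarrow> bool)
    \<Rightarrow> nat \<Rightarrow> nat list \<Rightarrow> nat \<Rightarrow> nat \<Rightarrow> bool" where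
  "halts_fin \<Phi> e \<sigma> t n = \<Phi> e (ext \<sigma>) n (min (length \<sigma>) t)"

(* generic t-sequence: tseq c 0 = t_{-1} = 1, tseq c (Suc n) = t_n *)
primrec tseq :: "(nat \<Rightarrow> nat \<Rightarrow> bool) \<Rightarrow> nat \<Rightarrow> nat" where
  "tseq c 0 = 1"
| "tseq c (Suc n) = (if \<exists>t. c n t then max (tseq c n + 1) (LEAST t. c n t)
                     else tseq c n + 1)"

definition tZ :: "(nat \<Rightarrow> (nat \<Rightarrow> nat) \<Rightarrow> nat \<Rightarrow> nat \<Rightarrow> bool) \<Rightarrow> (nat \<Rightarrow> nat) \<Rightarrow> nat \<Rightarrow> nat" where
  "tZ \<Phi> Z = tseq (\<lambda>n t. halts_inf \<Phi> n Z t n)"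

definition tF :: "(nat \<Rightarrow> (nat \<Rightarrow> nat) \<Rightarrow> nat \<Rightarrow> nat \<Rightarrow> bool) \<Rightarrow> nat list \<Rightarrow> nat \<Rightarrow> nat" where
  "tF \<Phi> \<sigma> = tseq (\<lambda>n t. halts_fin \<Phi> n (take t \<sigma>) t n)"

definition JJ :: "(nat \<Rightarrow> (nat \<Rightarrow> nat) \<Rightarrow> nat \<Rightarrow> nat \<Rightarrow> bool) \<Rightarrow> (nat \<Rightarrow> nat) \<Rightarrow> nat \<Rightarrow> nat" where
  "JJ \<Phi> Z n = code (restr Z (tZ \<Phi> Z (Suc n)))"

definition Jfin :: "(nat \<Rightarrow> (nat \<Rightarrow> nat) \<Rightarrow> nat \<Rightarrow> nat \<Rightarrow> bool) \<Rightarrow> nat list \<Rightarrow> nat list" where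
  "Jfin \<Phi> \<sigma> = (let k = (LEAST k. tF \<Phi> \<sigma> (Suc k) > length \<sigma>)
                 in map (\<lambda>i. code (take (tF \<Phi> \<sigma> (Suc i)) \<sigma>)) [0..<k])"

definition JT :: "(nat \<Rightarrow> (nat \<Rightarrow> nat) \<Rightarrow> nat \<Rightarrow> nat \<Rightarrow> bool) \<Rightarrow> nat list set \<Rightarrow> nat list set" where
  "JT \<Phi> T = Jfin \<Phi> ` T"

end

theory Submission
  imports Defs
begin

text \<open>
  By the use principle, the first \<open>n\<close> entries of the t-sequence of \<open>Z\<close> only depend on
  halting computations with oracle \<open>Z\<restriction>t\<close>, \<open>t \<le> t\<^sub>n\<close>; so the finite t-sequence of
  \<open>Z\<restriction>t\<^sub>n\<close> agrees with that of \<open>Z\<close> up to \<open>n\<close>, and \<open>(JJ Z)\<restriction>n = Jfin (Z\<restriction>t\<^sub>n)\<close>.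
  This gives \<open>\<supseteq>\<close>.  Conversely, a path \<open>Y\<close> through \<open>JT T\<close> decodes to strings
  \<open>Y(i) = \<sigma>\<^sub>M\<restriction>t\<^sub>i\<close>, where \<open>Jfin \<sigma>\<^sub>M = Y\<restriction>M\<close> for some \<open>\<sigma>\<^sub>M \<in> T\<close> and every \<open>M > i\<close>.
  These strings form a chain whose union \<open>Z\<close> lies in \<open>[T]\<close>, and by induction the t-sequence
  of \<open>Z\<close> agrees with that of \<open>\<sigma>\<^sub>M\<close> once \<open>M\<close> is large enough to contain a halting witness,
  whence \<open>JJ Z = Y\<close>.
\<close>

lemma tseq_less_Suc: "tseq c n < tseq c (Suc n)"
  by auto

lemma strict_mono_tseq: "strict_mono (tseq c)"
  unfolding strict_mono_Suc_iff using tseq_less_Suc by blast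

lemma tseq_mono: "i \<le> j \<Longrightarrow> tseq c i \<le> tseq c j"
  using strict_mono_less_eq[OF strict_mono_tseq] by blast

lemma less_tseq: "n < tseq c n"
proof (induction n)
  case (Suc n)
  then show ?case using tseq_less_Suc[of c n] by linarith
qed simp

lemma Least_eq_if_agree_upto:
  fixes P Q :: "nat \<Rightarrow> bool"
  assumes agree: "\<forall>t\<le>L. P t \<longleftrightarrow> Q t" and "t \<le> L" "Q t"
  shows "Least P = Least Q"
proof (rule Least_equality)
  have "(LEAST t. Q t) \<le> L" using \<open>t \<le> L\<close> Least_le[of Q, OF \<open>Q t\<close>] by linarith
  then show "P (LEAST t. Q t)" using agree LeastI[of Q, OF \<open>Q t\<close>] by blast
  show "(LEAST t. Q t) \<le> y" if "P y" for y
    using \<open>(LEAST t. Q t) \<le> L\<close> agree that by (cases "y \<le> L") (auto intro: Least_le)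
qed

lemma tseq_Suc_eq_if_agree:
  assumes prev: "tseq c j = tseq d j"
    and bound: "tseq c (Suc j) \<le> L"
    and agree: "\<forall>t\<le>L. c j t \<longleftrightarrow> d j t"
    and witness: "\<forall>t. d j t \<longrightarrow> (\<exists>t'\<le>L. d j t')"
  shows "tseq c (Suc j) = tseq d (Suc j)"
proof (cases "\<exists>t\<le>L. d j t")
  case True
  then obtain t where "t \<le> L" "d j t" by blast
  then have "c j t" "(LEAST t. c j t) = (LEAST t. d j t)"
    using agree Least_eq_if_agree_upto[OF agree] by auto
  then show ?thesis using prev \<open>d j t\<close> by auto
next
  case False
  have "\<not> c j t" for t
  proof
    assume "c j t"
    moreover have "(LEAST t. c j t) \<le> tseq c (Suc j)"
      using \<open>c j t\<close> by auto
    ultimately have "c j (LEAST t. c j t)" "(LEAST t. c j t) \<le> L"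
      using bound by (auto intro: LeastI)
    then show False using agree False by blast
  qed
  then show ?thesis using False witness prev by auto
qed

declare tseq.simps(2) [simp del]

lemma take_restr: "n \<le> m \<Longrightarrow> take n (restr Z m) = restr Z n"
  unfolding restr_def by (simp add: take_map min_def)

lemma length_restr [simp]: "length (restr Z n) = n"
  by (simp add: restr_def)

lemma halts_fin_take_beyond_length:
  "length \<sigma> \<le> t \<Longrightarrow> halts_fin \<Phi> e (take t \<sigma>) t n = halts_fin \<Phi> e \<sigma> (length \<sigma>) n"
  by (simp add: halts_fin_def)

lemma length_Jfin_eqI:
  assumes "tF \<Phi> \<sigma> n \<le> length \<sigma>" "length \<sigma> < tF \<Phi> \<sigma> (Suc n)"
  shows "length (Jfin \<Phi> \<sigma>) = n"
proof -
  have below: "tF \<Phi> \<sigma> (Suc i) \<le> length \<sigma>" if "i < n" for i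
    using assms(1) that unfolding tF_def by (meson Suc_leI order_trans tseq_mono)
  have "(LEAST k. length \<sigma> < tF \<Phi> \<sigma> (Suc k)) = n"
  proof (rule Least_equality)
    show "n \<le> k" if "length \<sigma> < tF \<Phi> \<sigma> (Suc k)" for k
      using below[of k] that by (meson leD leI)
  qed (fact assms(2))
  then show ?thesis by (simp add: Jfin_def)
qed

lemma tF_Suc_le_length: "i < length (Jfin \<Phi> \<sigma>) \<Longrightarrow> tF \<Phi> \<sigma> (Suc i) \<le> length \<sigma>"
  unfolding Jfin_def Let_def using not_less_Least[of i "\<lambda>k. length \<sigma> < tF \<Phi> \<sigma> (Suc k)"] by simp

lemma nth_Jfin: "i < length (Jfin \<Phi> \<sigma>) \<Longrightarrow> Jfin \<Phi> \<sigma> ! i = code (take (tF \<Phi> \<sigma> (Suc i)) \<sigma>)"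
  unfolding Jfin_def Let_def by simp

definition decode_path :: "(nat \<Rightarrow> nat) \<Rightarrow> nat \<Rightarrow> nat" where
  "decode_path Y p = list_decode (Y p) ! p"

lemma restr_diagonal_limit:
  fixes \<tau> :: "nat \<Rightarrow> nat list"
  assumes chain: "\<And>i i'. i \<le> i' \<Longrightarrow> take (length (\<tau> i)) (\<tau> i') = \<tau> i"
    and long: "\<And>i. i < length (\<tau> i)"
  shows "restr (\<lambda>p. \<tau> p ! p) (length (\<tau> i)) = \<tau> i"
proof (rule nth_equalityI)
  fix p assume "p < length (restr (\<lambda>p. \<tau> p ! p) (length (\<tau> i)))"
  then have p: "p < length (\<tau> i)" by simp
  have "\<tau> p ! p = \<tau> i ! p"
  proof (cases "p \<le> i")
    case True
    then show ?thesis using chain[OF True] long[of p] by (metis nth_take)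
  next
    case False
    then show ?thesis using chain[of i p] p by (metis nat_le_linear nth_take)
  qed
  then show "restr (\<lambda>p. \<tau> p ! p) (length (\<tau> i)) ! p = \<tau> i ! p"
    using p by (simp add: restr_def)
qed simp

locale use_principle =
  fixes \<Phi> :: "nat \<Rightarrow> (nat \<Rightarrow> nat) \<Rightarrow> nat \<Rightarrow> nat \<Rightarrow> bool"
  assumes use: "\<And>e X Y n s. (\<forall>i<s. X i = Y i) \<Longrightarrow> \<Phi> e X n s = \<Phi> e Y n s"
begin

lemma halts_fin_restr: "halts_fin \<Phi> e (restr Z t) t n = halts_inf \<Phi> e Z t n"
  unfolding halts_fin_def halts_inf_def by (simp add: use ext_def restr_def)

lemma halts_fin_take_eq_halts_inf:
  assumes "take L \<sigma> = restr Z L" "t \<le> L"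
  shows "halts_fin \<Phi> e (take t \<sigma>) t n = halts_inf \<Phi> e Z t n"
proof -
  have "take t \<sigma> = restr Z t"
    using take_take[of t L \<sigma>] assms take_restr[of t L Z] by (simp add: min_absorb1)
  then show ?thesis by (simp add: halts_fin_restr)
qed

lemma tF_restr_tZ:
  assumes "j \<le> n"
  shows "tF \<Phi> (restr Z (tZ \<Phi> Z n)) j = tZ \<Phi> Z j"
  using assms
proof (induction j)
  case 0
  then show ?case by (simp add: tF_def tZ_def)
next
  case (Suc j)
  define m where "m = tZ \<Phi> Z n"
  define \<sigma> where "\<sigma> = restr Z m"
  have prev: "tZ \<Phi> Z j = tF \<Phi> \<sigma> j"
    using Suc by (simp add: \<sigma>_def m_def)
  have bound: "tZ \<Phi> Z (Suc j) \<le> m"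
    unfolding m_def tZ_def using Suc.prems by (rule tseq_mono)
  have agree: "\<forall>t\<le>m. halts_inf \<Phi> j Z t j = halts_fin \<Phi> j (take t \<sigma>) t j"
    using halts_fin_take_eq_halts_inf[of m \<sigma>] by (simp add: \<sigma>_def)
  have witness: "\<forall>t. halts_fin \<Phi> j (take t \<sigma>) t j \<longrightarrow> (\<exists>t'\<le>m. halts_fin \<Phi> j (take t' \<sigma>) t' j)"
  proof (intro allI impI)
    fix t assume "halts_fin \<Phi> j (take t \<sigma>) t j"
    then have "halts_fin \<Phi> j (take (min t m) \<sigma>) (min t m) j"
      using halts_fin_take_beyond_length[of \<sigma> t] halts_fin_take_beyond_length[of \<sigma> m]
      by (auto simp: \<sigma>_def min_def)
    then show "\<exists>t'\<le>m. halts_fin \<Phi> j (take t' \<sigma>) t' j"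
      by (intro exI[of _ "min t m"]) simp
  qed
  have "tZ \<Phi> Z (Suc j) = tF \<Phi> \<sigma> (Suc j)"
    using prev bound agree witness unfolding tF_def tZ_def by (rule tseq_Suc_eq_if_agree)
  then show ?case by (simp add: \<sigma>_def m_def)
qed

lemma restr_JJ: "restr (JJ \<Phi> Z) n = Jfin \<Phi> (restr Z (tZ \<Phi> Z n))"
proof -
  define \<sigma> where "\<sigma> = restr Z (tZ \<Phi> Z n)"
  have tF_eq: "tF \<Phi> \<sigma> j = tZ \<Phi> Z j" if "j \<le> n" for j
    using tF_restr_tZ[OF that] by (simp add: \<sigma>_def)
  have "tF \<Phi> \<sigma> n < tF \<Phi> \<sigma> (Suc n)"
    unfolding tF_def by (rule tseq_less_Suc)
  then have "length (Jfin \<Phi> \<sigma>) = n"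
    using tF_eq[of n] by (intro length_Jfin_eqI) (simp_all add: \<sigma>_def)
  moreover have "Jfin \<Phi> \<sigma> ! i = JJ \<Phi> Z i" if "i < n" for i
  proof -
    have "tZ \<Phi> Z (Suc i) \<le> tZ \<Phi> Z n"
      using that tseq_mono unfolding tZ_def by (metis Suc_leI)
    then show ?thesis
      using nth_Jfin[of i \<Phi> \<sigma>] tF_eq[of "Suc i"] that \<open>length (Jfin \<Phi> \<sigma>) = n\<close>
      by (simp add: JJ_def \<sigma>_def take_restr)
  qed
  ultimately show ?thesis
    by (intro nth_equalityI) (simp_all add: \<sigma>_def restr_def)
qed

lemma JJ_in_paths_JT: "Z \<in> paths T \<Longrightarrow> JJ \<Phi> Z \<in> paths (JT \<Phi> T)"
  unfolding paths_def JT_def using restr_JJ by auto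

end

locale JT_path = use_principle +
  fixes Y :: "nat \<Rightarrow> nat" and S :: "nat \<Rightarrow> nat list"
  assumes Jfin_S: "\<And>M. Jfin \<Phi> (S M) = restr Y M"
begin

lemma length_Jfin_S: "length (Jfin \<Phi> (S M)) = M"
  by (simp add: Jfin_S)

lemma decode_eq_take: "i < M \<Longrightarrow> list_decode (Y i) = take (tF \<Phi> (S M) (Suc i)) (S M)"
  using nth_Jfin[of i \<Phi> "S M"] Jfin_S[of M]
  by (simp add: restr_def code_def length_Jfin_S)

lemma length_decode: "i < M \<Longrightarrow> length (list_decode (Y i)) = tF \<Phi> (S M) (Suc i)"
  using decode_eq_take tF_Suc_le_length[of i \<Phi> "S M"] by (simp add: length_Jfin_S)

lemma decode_prefix:
  "i \<le> i' \<Longrightarrow> take (length (list_decode (Y i))) (list_decode (Y i')) = list_decode (Y i)"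
  using decode_eq_take[of i "Suc i'"] decode_eq_take[of i' "Suc i'"]
    length_decode[of i "Suc i'"] length_decode[of i' "Suc i'"]
    tseq_mono[of "Suc i" "Suc i'"]
  unfolding tF_def by (simp add: min_def)

lemma less_length_decode: "i < length (list_decode (Y i))"
proof -
  have "Suc i < tF \<Phi> (S (Suc i)) (Suc i)"
    unfolding tF_def by (rule less_tseq)
  then show ?thesis using length_decode[of i "Suc i"] by simp
qed

lemma length_decode_mono:
  assumes "i \<le> i'"
  shows "length (list_decode (Y i)) \<le> length (list_decode (Y i'))"
  using arg_cong[where f = length, OF decode_prefix[OF assms]] by (simp add: min_def split: if_splits)

lemma restr_decode_path:
  "restr (decode_path Y) (length (list_decode (Y i))) = list_decode (Y i)"
  unfolding decode_path_def[abs_def]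
  using restr_diagonal_limit[OF decode_prefix less_length_decode] .

lemma take_S_eq_restr_decode_path:
  assumes "i < M"
  shows "take (length (list_decode (Y i))) (S M) = restr (decode_path Y) (length (list_decode (Y i)))"
  using decode_eq_take[OF assms] length_decode[OF assms] restr_decode_path[of i] by simp

text \<open>
  The step at stage \<open>j\<close> compares with \<open>S M\<close> for \<open>M\<close> beyond a halting time \<open>w\<close> of machine
  \<open>j\<close> on \<open>decode_path Y\<close>, if there is one; this puts \<open>w\<close> below the agreement bound \<open>L\<close>.
\<close>

lemma tZ_decode_path: "tZ \<Phi> (decode_path Y) (Suc j) = length (list_decode (Y j))"
proof (induction j rule: less_induct)
  case (less j)
  let ?Z = "decode_path Y"
  obtain w where w: "(\<exists>t. halts_inf \<Phi> j ?Z t j) \<longrightarrow> halts_inf \<Phi> j ?Z w j" by blast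
  define M where "M = Suc (max j w)"
  define L where "L = length (list_decode (Y (max j w)))"
  have prev: "tF \<Phi> (S M) j = tZ \<Phi> ?Z j"
  proof (cases j)
    case (Suc i)
    then show ?thesis using less.IH[of i] length_decode[of i M] by (simp add: M_def)
  qed (simp add: tF_def tZ_def)
  have new: "tF \<Phi> (S M) (Suc j) = length (list_decode (Y j))"
    using length_decode[of j M] by (simp add: M_def)
  have bound: "tF \<Phi> (S M) (Suc j) \<le> L"
    using new length_decode_mono[of j "max j w"] by (simp add: L_def)
  have agree: "\<forall>t\<le>L. halts_fin \<Phi> j (take t (S M)) t j = halts_inf \<Phi> j ?Z t j"
    using halts_fin_take_eq_halts_inf take_S_eq_restr_decode_path[of "max j w" M]
    by (simp add: L_def M_def)
  have "w \<le> L"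
    using less_length_decode[of "max j w"] by (simp add: L_def)
  then have witness: "\<forall>t. halts_inf \<Phi> j ?Z t j \<longrightarrow> (\<exists>t'\<le>L. halts_inf \<Phi> j ?Z t' j)"
    using w by blast
  have "tF \<Phi> (S M) (Suc j) = tZ \<Phi> ?Z (Suc j)"
    using prev bound agree witness unfolding tF_def tZ_def by (rule tseq_Suc_eq_if_agree)
  then show ?case using new by simp
qed

lemma JJ_decode_path: "JJ \<Phi> (decode_path Y) = Y"
proof
  fix n
  show "JJ \<Phi> (decode_path Y) n = Y n"
    using restr_decode_path[of n] by (simp add: JJ_def tZ_decode_path code_def)
qed

lemma decode_path_in_paths:
  assumes "is_tree T" "\<And>M. S M \<in> T"
  shows "decode_path Y \<in> paths T"
  unfolding paths_def
proof (intro CollectI allI)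
  fix n
  have "n \<le> length (list_decode (Y n))"
    using less_length_decode[of n] by simp
  then have "restr (decode_path Y) n = take n (restr (decode_path Y) (length (list_decode (Y n))))"
    by (simp add: take_restr)
  also have "\<dots> = take n (take (length (list_decode (Y n))) (S (Suc n)))"
    by (simp add: take_S_eq_restr_decode_path)
  finally show "restr (decode_path Y) n \<in> T"
    using assms unfolding is_tree_def by (simp add: take_take)
qed

end

context use_principle
begin

lemma paths_JT_subset:
  assumes "is_tree T"
  shows "paths (JT \<Phi> T) \<subseteq> JJ \<Phi> ` paths T"
proof
  fix Y assume "Y \<in> paths (JT \<Phi> T)"
  then have "\<forall>M. \<exists>\<sigma>. \<sigma> \<in> T \<and> Jfin \<Phi> \<sigma> = restr Y M"
    by (auto simp: paths_def JT_def image_iff) (metis (mono_tags))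
  then obtain S where S: "\<And>M. S M \<in> T" "\<And>M. Jfin \<Phi> (S M) = restr Y M"
    using choice[of "\<lambda>M \<sigma>. \<sigma> \<in> T \<and> Jfin \<Phi> \<sigma> = restr Y M"] by blast
  interpret JT_path \<Phi> Y S
    by unfold_locales (fact S(2))
  show "Y \<in> JJ \<Phi> ` paths T"
    using JJ_decode_path decode_path_in_paths[OF assms S(1)] by force
qed

end

theorem lemma4p9:
  fixes \<Phi> :: "nat \<Rightarrow> (nat \<Rightarrow> nat) \<Rightarrow> nat \<Rightarrow> nat \<Rightarrow> bool"
    and T :: "nat list set"
  assumes use_principle: "\<And>e X Y n s. (\<forall>i<s. X i = Y i) \<Longrightarrow> \<Phi> e X n s = \<Phi> e Y n s"
    and tree: "is_tree T"
  shows "paths (JT \<Phi> T) = JJ \<Phi> ` paths T"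
proof -
  interpret use_principle \<Phi>
    by unfold_locales (fact use_principle)
  show ?thesis
    using paths_JT_subset[OF tree] JJ_in_paths_JT by blast
qed

end
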